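(* Let $\sigma,\pi$ be permutations both having exactly $k$ descents. Let $t$ be the total number of letters in all tails of adjacencies of $\pi$, i.e. the number of indices $i\ge2$ with $\pi_i=\pi_{i-1}+1$. If $t>|\sigma|$, then $\mu(\sigma,\pi)=0$.
   Context: A permutation of length $n$ is an arrangement $\pi=\pi_1\cdots\pi_n$ of $1,\dots,n$; $|\pi|$ denotes length. The permutation poset is ordered by pattern containment: $\sigma\le\pi$ if $\pi$ has a subsequence in the same relative order as $\sigma$. A descent is an index $i$ with $\pi_i>\pi_{i+1}$. $\mu$ is the Möbius function of this poset: $\mu(a,a)=1$, $\mu(a,b)=-\sum_{a\le z<b}\mu(a,z)$ for $a<b$, $\mu(a,b)=0$ if $a\not\le b$. An adjacency is a maximal run of consecutive positions carrying consecutive increasing values; its tail is all but its first letter. *)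

theory Defs
  imports Main
begin

definition is_perm :: "nat list \<Rightarrow> bool" where
  "is_perm p \<longleftrightarrow> distinct p \<and> set p = {1..length p}"

definition order_iso :: "nat list \<Rightarrow> nat list \<Rightarrow> bool" where
  "order_iso a b \<longleftrightarrow> length a = length b \<and>
     (\<forall>i < length a. \<forall>j < length a. (a ! i < a ! j) \<longleftrightarrow> (b ! i < b ! j))"

definition contains :: "nat list \<Rightarrow> nat list \<Rightarrow> bool" where
  "contains s p \<longleftrightarrow> (\<exists>I \<subseteq> {..<length p}. order_iso s (nths p I))"

lemma order_iso_sym: "order_iso a b \<Longrightarrow> order_iso b a"
  unfolding order_iso_def by auto

lemma strict_contains_length:
  assumes "contains s p" "\<not> contains p s" shows "length s < length p"
proof (rule ccontr)
  assume "\<not> length s < length p"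
  from assms(1) obtain I where I: "I \<subseteq> {..<length p}" "order_iso s (nths p I)"
    unfolding contains_def by blast
  have len: "length s = card {i. i < length p \<and> i \<in> I}"
    using I(2) by (simp add: order_iso_def length_nths)
  have "card {i. i < length p \<and> i \<in> I} \<le> length p"
    by (metis (no_types, lifting) card_mono card_lessThan finite_lessThan lessThan_iff mem_Collect_eq subsetI)
  hence eq: "length s = length p" using len \<open>\<not> length s < length p\<close> by simp
  have "{i. i < length p \<and> i \<in> I} = {..<length p}"
  proof (rule card_subset_eq)
    show "finite {..<length p}" by simp
    show "{i. i < length p \<and> i \<in> I} \<subseteq> {..<length p}" by auto
    show "card {i. i < length p \<and> i \<in> I} = card {..<length p}" using len eq by simp
  qed
  hence "\<forall>i<length p. i \<in> I" by auto
  hence "nths p I = p" by (rule nths_all)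
  hence "order_iso p s" using I(2) order_iso_sym by simp
  moreover have "nths s {..<length s} = s" by (rule nths_all) auto
  ultimately have "contains p s" unfolding contains_def by (metis order_refl)
  thus False using assms(2) by simp
qed

text \<open>Moebius function of the permutation poset. The strict order z < b is
  rendered as (z \<le> b and not b \<le> z), the strict part of the containment order.\<close>
function mobius :: "nat list \<Rightarrow> nat list \<Rightarrow> int" where
  "mobius a b =
     (if a = b then 1
      else if contains a b then
        - (\<Sum>z \<in> {z. is_perm z \<and> contains a z \<and> contains z b \<and> \<not> contains b z}. mobius a z)
      else 0)"
  by auto
termination
  by (relation "measure (\<lambda>(a, b). length b)") (auto intro: strict_contains_length)

definition descents :: "nat list \<Rightarrow> nat" where
  "descents p = card {i. Suc i < length p \<and> p ! i > p ! Suc i}"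

text \<open>Total number of letters in tails of adjacencies: indices i \<ge> 2 (1-based) with
  p_i = p_(i-1) + 1; here 0-based: 1 \<le> i < length p with p!i = p!(i-1) + 1.\<close>
definition adj_tail_count :: "nat list \<Rightarrow> nat" where
  "adj_tail_count p = card {i. 1 \<le> i \<and> i < length p \<and> p ! i = p ! (i - 1) + 1}"

end

theory Submission
  imports Defs
begin

text \<open>Double counting. Sum \<mu>(\<sigma>,x) (-1)^|S| over the permutations x between \<sigma> and \<pi> and
  the sets S of positions of \<pi> that contain all adjacency tails and some occurrence of x.
  For fixed S the letters of \<pi> at S form a pattern y with |y| = |S| > |\<sigma>|, and the x
  occurring in S are exactly those below y, so the inner sum vanishes by the recursion of \<mu>.
  For fixed x \<noteq> \<pi>, x has as many descents as \<pi>, so occurrences of x map ascending runs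
  into ascending runs of \<pi>. Then every S contains exactly one occurrence none of whose letters
  can be slid to the right along its run onto a position of S, and the sets S with a given such
  occurrence form a Boolean interval with a free position, whose alternating sum is 0.
  Only x = \<pi> survives, leaving \<mu>(\<sigma>,\<pi>) (-1)^|\<pi>| = 0.\<close>

declare mobius.simps[simp del]

section \<open>Occurrences as order-preserving embeddings\<close>

definition embedding :: "nat list \<Rightarrow> nat list \<Rightarrow> (nat \<Rightarrow> nat) \<Rightarrow> bool" where
  "embedding s p f \<longleftrightarrow> (\<forall>i<length s. f i < length p) \<and> (\<forall>i j. i < j \<longrightarrow> j < length s \<longrightarrow> f i < f j)
     \<and> (\<forall>i<length s. \<forall>j<length s. (s!i < s!j) = (p!(f i) < p!(f j)))"

lemma
  assumes "embedding x p f"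
  shows embedding_less_length: "a < length x \<Longrightarrow> f a < length p"
    and embedding_less_iff: "a < length x \<Longrightarrow> b < length x \<Longrightarrow> f a < f b \<longleftrightarrow> a < b"
    and embedding_order: "a < length x \<Longrightarrow> b < length x \<Longrightarrow> x!a < x!b \<longleftrightarrow> p!(f a) < p!(f b)"
proof -
  show "a < length x \<Longrightarrow> f a < length p" using assms unfolding embedding_def by auto
  show "a < length x \<Longrightarrow> b < length x \<Longrightarrow> x!a < x!b \<longleftrightarrow> p!(f a) < p!(f b)"
    using assms unfolding embedding_def by auto
  assume "a < length x" "b < length x"
  thus "f a < f b \<longleftrightarrow> a < b" using assms unfolding embedding_def
    by (cases a b rule: linorder_cases) (auto dest: order.asym)
qed

lemma nths_conv_map_filter: "nths p I = map ((!) p) (filter (\<lambda>i. i \<in> I) [0..<length p])"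
proof -
  have "zip p [0..<length p] = map (\<lambda>i. (p!i, i)) [0..<length p]"
    by (rule nth_equalityI) auto
  thus ?thesis unfolding nths_def by (simp add: filter_map o_def)
qed

lemma filter_mem_image_upt:
  assumes "\<forall>i j. i < j \<longrightarrow> j < m \<longrightarrow> f i < f j" "\<forall>i<m. f i < n"
  shows "filter (\<lambda>i. i \<in> f ` {..<m}) [0..<n] = map f [0..<m]"
proof (rule sorted_distinct_set_unique)
  have "strict_mono_on {..<m} f" using assms(1) by (auto simp: strict_mono_on_def)
  hence "sorted_wrt (<) (map f [0..<m])"
    by (auto simp: sorted_wrt_iff_nth_less strict_mono_on_def)
  thus "sorted (map f [0..<m])" "distinct (map f [0..<m])"
    by (auto simp: strict_sorted_iff)
  show "set (filter (\<lambda>i. i \<in> f ` {..<m}) [0..<n]) = set (map f [0..<m])"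
    using assms(2) by auto
  show "sorted (filter (\<lambda>i. i \<in> f ` {..<m}) [0..<n])" by (rule sorted_wrt_filter) simp
qed auto

lemma contains_iff_embedding: "contains s p \<longleftrightarrow> (\<exists>f. embedding s p f)"
proof
  assume "contains s p"
  then obtain I where I: "I \<subseteq> {..<length p}" "order_iso s (nths p I)"
    unfolding contains_def by blast
  define il where "il = filter (\<lambda>i. i \<in> I) [0..<length p]"
  have N: "nths p I = map ((!) p) il" unfolding il_def by (rule nths_conv_map_filter)
  have sw: "sorted_wrt (<) il" unfolding il_def by (rule sorted_wrt_filter) simp
  have len: "length s = length il" using I(2) N by (simp add: order_iso_def)
  have "embedding s p ((!) il)"
    unfolding embedding_def
  proof (intro conjI allI impI)
    fix i assume "i < length s"
    hence "il ! i \<in> set il" using len by simp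
    thus "il ! i < length p" unfolding il_def by auto
  next
    fix i j assume "i < j" "j < length s"
    thus "il ! i < il ! j" using sw len by (simp add: sorted_wrt_iff_nth_less)
  next
    fix i j assume "i < length s" "j < length s"
    thus "(s ! i < s ! j) = (p ! (il ! i) < p ! (il ! j))"
      using I(2) N len by (auto simp: order_iso_def)
  qed
  thus "\<exists>f. embedding s p f" by blast
next
  assume "\<exists>f. embedding s p f"
  then obtain f where f: "embedding s p f" by blast
  have "nths p (f ` {..<length s}) = map ((!) p) (map f [0..<length s])"
    unfolding nths_conv_map_filter using f unfolding embedding_def
    by (subst filter_mem_image_upt) auto
  hence "order_iso s (nths p (f ` {..<length s}))"
    using f unfolding embedding_def order_iso_def by auto
  moreover have "f ` {..<length s} \<subseteq> {..<length p}" using f unfolding embedding_def by auto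
  ultimately show "contains s p" unfolding contains_def by blast
qed

lemma embedding_comp: "embedding a b f \<Longrightarrow> embedding b c g \<Longrightarrow> embedding a c (g \<circ> f)"
  unfolding embedding_def by auto

lemma contains_trans: "contains a b \<Longrightarrow> contains b c \<Longrightarrow> contains a c"
  using embedding_comp contains_iff_embedding by metis

lemma embedding_id: "embedding a a id"
  unfolding embedding_def by auto

lemma contains_refl: "contains a a"
  using embedding_id contains_iff_embedding by blast

lemma embedding_gap_le:
  assumes "embedding s p f" "i \<le> j" "j < length s" shows "f i + (j - i) \<le> f j"
  using assms(2,3)
proof (induction j rule: dec_induct)
  case (step j)
  moreover have "f j < f (Suc j)" using step.prems assms(1) unfolding embedding_def by auto
  ultimately show ?case by simp
qed simp

lemma embedding_length_le: "embedding s p f \<Longrightarrow> length s \<le> length p"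
proof (cases "length s")
  case (Suc k)
  assume e: "embedding s p f"
  have "f 0 + k \<le> f k" using embedding_gap_le[OF e, of 0 k] Suc by simp
  moreover have "f k < length p" using e Suc unfolding embedding_def by auto
  ultimately show ?thesis using Suc by simp
qed simp

lemma contains_length_le: "contains a b \<Longrightarrow> length a \<le> length b"
  using embedding_length_le contains_iff_embedding by blast

lemma embedding_same_length_eq_id:
  assumes e: "embedding s p f" and l: "length s = length p" and i: "i < length s"
  shows "f i = i"
proof -
  have "f 0 + i \<le> f i" using embedding_gap_le[OF e, of 0 i] i by simp
  moreover have "f i + (length s - 1 - i) \<le> f (length s - 1)"
    using embedding_gap_le[OF e, of i "length s - 1"] i by simp
  moreover have "f (length s - 1) < length p" using e i unfolding embedding_def by auto
  ultimately show ?thesis using l i by linarith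
qed

lemma embedding_same_length_order_iso:
  assumes "embedding s p f" "length s = length p" shows "order_iso s p"
  using assms embedding_same_length_eq_id[OF assms] unfolding embedding_def order_iso_def by auto

lemma is_perm_nth_eq_card:
  assumes "is_perm a" "i < length a"
  shows "a ! i = card {j. j < length a \<and> a!j \<le> a!i}"
proof -
  have d: "distinct a" and s: "set a = {1..length a}" using assms(1) unfolding is_perm_def by auto
  have "(!) a ` {j. j < length a \<and> a!j \<le> a!i} = {v \<in> set a. v \<le> a!i}"
    by (auto simp: in_set_conv_nth)
  also have "\<dots> = {1..a!i}" using s assms(2) nth_mem[OF assms(2)] by auto
  finally have "card ((!) a ` {j. j < length a \<and> a!j \<le> a!i}) = a!i" by simp
  moreover have "inj_on ((!) a) {j. j < length a \<and> a!j \<le> a!i}"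
    using d by (auto simp: inj_on_def nth_eq_iff_index_eq)
  ultimately show ?thesis by (simp add: card_image)
qed

lemma order_iso_perm_eq: assumes "is_perm a" "is_perm b" "order_iso a b" shows "a = b"
proof (rule nth_equalityI)
  show l: "length a = length b" using assms(3) unfolding order_iso_def by simp
  fix i assume i: "i < length a"
  have "{j. j < length a \<and> a!j \<le> a!i} = {j. j < length b \<and> b!j \<le> b!i}"
    using assms(3) i l unfolding order_iso_def by (auto simp: not_less[symmetric])
  thus "a ! i = b ! i" using is_perm_nth_eq_card[OF assms(1) i] is_perm_nth_eq_card[OF assms(2)] i l
    by simp
qed

lemma contains_antisym:
  assumes "is_perm a" "is_perm b" "contains a b" "contains b a" shows "a = b"
proof -
  obtain f where f: "embedding a b f" using assms(3) contains_iff_embedding by blast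
  have "length a = length b" using assms(3,4) contains_length_le le_antisym by blast
  thus ?thesis using order_iso_perm_eq assms(1,2) embedding_same_length_order_iso[OF f] by blast
qed

lemma contains_length_less:
  assumes "is_perm a" "is_perm b" "contains a b" "a \<noteq> b" shows "length a < length b"
  using assms contains_antisym contains_length_le contains_iff_embedding
    embedding_same_length_order_iso order_iso_perm_eq
  by (metis le_neq_implies_less)

definition standardize :: "nat list \<Rightarrow> nat list" where
  "standardize L = map (\<lambda>v. card {w \<in> set L. w \<le> v}) L"

lemma
  assumes "distinct L"
  shows is_perm_standardize: "is_perm (standardize L)"
    and order_iso_standardize: "order_iso (standardize L) L"
    and length_standardize: "length (standardize L) = length L"
proof -
  define rk where "rk v = card {w \<in> set L. w \<le> v}" for v
  have rk_less: "rk v < rk w" if "v \<in> set L" "w \<in> set L" "v < w" for v w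
  proof -
    have "{x \<in> set L. x \<le> v} \<subset> {x \<in> set L. x \<le> w}" using that by force
    thus ?thesis unfolding rk_def by (simp add: psubset_card_mono)
  qed
  have rk_less_iff: "rk v < rk w \<longleftrightarrow> v < w" if "v \<in> set L" "w \<in> set L" for v w
    using rk_less[OF that] rk_less[OF that(2,1)] by (metis less_asym linorder_neqE_nat)
  show l: "length (standardize L) = length L" unfolding standardize_def by simp
  show "order_iso (standardize L) L" unfolding order_iso_def standardize_def rk_def[symmetric]
    using rk_less_iff by auto
  have "inj_on rk (set L)" using rk_less by (metis inj_onI less_irrefl linorder_neqE_nat)
  hence dist: "distinct (standardize L)" unfolding standardize_def rk_def[symmetric]
    using assms by (simp add: distinct_map)
  have "rk v \<in> {1..length L}" if "v \<in> set L" for v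
  proof -
    have "card {w \<in> set L. w \<le> v} > 0" using that by (auto simp: card_gt_0_iff)
    moreover have "rk v \<le> card (set L)" unfolding rk_def by (rule card_mono) auto
    ultimately show ?thesis using assms by (simp add: rk_def distinct_card)
  qed
  hence "set (standardize L) \<subseteq> {1..length L}" unfolding standardize_def rk_def by auto
  moreover have "card (set (standardize L)) = length L" using dist l by (simp add: distinct_card)
  ultimately have "set (standardize L) = {1..length L}" by (simp add: card_subset_eq)
  thus "is_perm (standardize L)" using dist l unfolding is_perm_def by simp
qed

section \<open>Descents and ascending runs\<close>

definition descents_before :: "nat list \<Rightarrow> nat \<Rightarrow> nat" where
  "descents_before p q = card {d. d < q \<and> Suc d < length p \<and> p!Suc d < p!d}"

definition ascending :: "nat list \<Rightarrow> nat \<Rightarrow> nat \<Rightarrow> bool" where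
  "ascending p i j \<longleftrightarrow> (\<forall>d. i \<le> d \<and> d < j \<longrightarrow> p!d < p!Suc d)"

lemma finite_descent_positions: "finite {d. d < q \<and> Suc d < length p \<and> p!Suc d < p!d}"
  by (rule finite_subset[of _ "{..<q}"]) auto

lemma descents_before_0 [simp]: "descents_before p 0 = 0"
  unfolding descents_before_def by simp

lemma descents_before_Suc:
  "descents_before p (Suc q) = descents_before p q + (if Suc q < length p \<and> p!Suc q < p!q then 1 else 0)"
proof -
  have "{d. d < Suc q \<and> Suc d < length p \<and> p!Suc d < p!d} =
     {d. d < q \<and> Suc d < length p \<and> p!Suc d < p!d} \<union>
     (if Suc q < length p \<and> p!Suc q < p!q then {q} else {})"
    by (auto simp: less_Suc_eq)
  thus ?thesis unfolding descents_before_def by (auto simp: card_insert_if finite_descent_positions)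
qed

lemma descents_before_mono: "q \<le> q' \<Longrightarrow> descents_before p q \<le> descents_before p q'"
  unfolding descents_before_def by (rule card_mono[OF finite_descent_positions]) auto

lemma descents_before_less:
  assumes "q \<le> d" "d < q'" "Suc d < length p" "p!Suc d < p!d"
  shows "descents_before p q < descents_before p q'"
proof -
  let ?D = "\<lambda>q. {d. d < q \<and> Suc d < length p \<and> p!Suc d < p!d}"
  have "?D q \<subseteq> ?D q'" "d \<in> ?D q'" "d \<notin> ?D q" using assms by auto
  hence "?D q \<subset> ?D q'" by blast
  thus ?thesis unfolding descents_before_def by (rule psubset_card_mono[OF finite_descent_positions])
qed

lemma descents_before_length_pred:
  assumes "length p \<le> Suc q" shows "descents_before p q = descents p"
proof -
  have "{d. d < q \<and> Suc d < length p \<and> p!Suc d < p!d} = {i. Suc i < length p \<and> p ! i > p ! Suc i}"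
    using assms by auto
  thus ?thesis unfolding descents_def descents_before_def by simp
qed

lemma descents_before_le_descents: "descents_before p q \<le> descents p"
proof -
  have "descents_before p q \<le> descents_before p (max q (length p))"
    by (rule descents_before_mono) simp
  also have "\<dots> = descents p" by (rule descents_before_length_pred) simp
  finally show ?thesis .
qed

lemma ascending_of_descents_before_eq:
  assumes "descents_before p i = descents_before p j" "distinct p" "j < length p"
  shows "ascending p i j"
  unfolding ascending_def
proof (intro allI impI)
  fix d assume d: "i \<le> d \<and> d < j"
  show "p!d < p!Suc d"
  proof (rule ccontr)
  assume "\<not> p!d < p!Suc d"
  moreover have "p!d \<noteq> p!Suc d" using d assms(2,3) by (simp add: nth_eq_iff_index_eq)
  ultimately have "descents_before p i < descents_before p j"
    using d assms(3) by (intro descents_before_less[of i d]) auto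
  thus False using assms(1) by simp
  qed
qed

lemma ascending_less:
  assumes asc: "ascending p i j" and "i \<le> a" "a < b" "b \<le> j" shows "p!a < p!b"
  using \<open>a < b\<close> \<open>b \<le> j\<close>
proof (induction b)
  case (Suc b)
  have "p!b < p!Suc b" using asc Suc.prems \<open>i \<le> a\<close> unfolding ascending_def by simp
  thus ?case using Suc by (cases "a = b") auto
qed simp

lemma ascending_le:
  "ascending p i j \<Longrightarrow> i \<le> a \<Longrightarrow> a \<le> b \<Longrightarrow> b \<le> j \<Longrightarrow> p!a \<le> p!b"
  using ascending_less[of p i j a b] by (cases "a = b") auto

lemma descent_between:
  fixes p :: "nat list"
  assumes "i < j" "p!j < p!i"
  shows "\<exists>d. i \<le> d \<and> d < j \<and> p!Suc d < p!d"
  using assms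
proof (induction j)
  case (Suc j)
  show ?case
  proof (cases "p!Suc j < p!j")
    case True
    thus ?thesis using Suc.prems by (intro exI[of _ j]) auto
  next
    case False
    hence "p!j < p!i" using Suc.prems by linarith
    moreover from this have "i < j" using Suc.prems False by (cases "i = j") auto
    ultimately obtain d where "i \<le> d \<and> d < j \<and> p!Suc d < p!d" using Suc.IH by blast
    thus ?thesis by auto
  qed
qed simp

lemma embedding_descents_before:
  assumes f: "embedding x p f" and "a \<le> b" "b < length x"
  shows "descents_before x b + descents_before p (f a) \<le> descents_before x a + descents_before p (f b)"
  using \<open>a \<le> b\<close> \<open>b < length x\<close>
proof (induction b rule: dec_induct)
  case (step b)
  have fb: "f b < f (Suc b)" "f (Suc b) < length p" using step.prems f unfolding embedding_def by auto
  have "descents_before p (f b) + (if Suc b < length x \<and> x!Suc b < x!b then 1 else 0)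
      \<le> descents_before p (f (Suc b))"
  proof (cases "x!Suc b < x!b")
    case True
    hence "p!(f (Suc b)) < p!(f b)" using step.prems f unfolding embedding_def by auto
    then obtain d where "f b \<le> d" "d < f (Suc b)" "p!Suc d < p!d"
      using descent_between[OF fb(1)] by blast
    hence "descents_before p (f b) < descents_before p (f (Suc b))"
      using fb by (intro descents_before_less) auto
    thus ?thesis by simp
  qed (use fb descents_before_mono in auto)
  thus ?case using step descents_before_Suc[of x b] by simp
qed simp

lemma embedding_descents_le: assumes "embedding x p f" shows "descents x \<le> descents p"
proof (cases "length x")
  case (Suc m)
  have "descents_before x m + descents_before p (f 0) \<le> descents_before x 0 + descents_before p (f m)"
    using embedding_descents_before[OF assms, of 0 m] Suc by simp
  thus ?thesis using descents_before_length_pred[of x m] descents_before_le_descents[of p "f m"] Suc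
    by simp
qed (simp add: descents_def)

lemma contains_descents_le: "contains x p \<Longrightarrow> descents x \<le> descents p"
  using embedding_descents_le contains_iff_embedding by blast

text \<open>With equally many descents, every embedding maps the descents of x onto
  all descents of p; so it maps each ascending run of x into one ascending run of p.\<close>

lemma embedding_descents_before_eq:
  assumes "embedding x p f" "descents x = descents p" "a < length x"
  shows "descents_before p (f a) = descents_before x a"
proof -
  obtain m where m: "length x = Suc m" using assms(3) by (cases "length x") auto
  have "descents_before x a + descents_before p (f 0) \<le> descents_before p (f a)"
    using embedding_descents_before[OF assms(1), of 0 a] assms(3) by simp
  moreover have "descents_before x m + descents_before p (f a) \<le> descents_before x a + descents p"
    using embedding_descents_before[OF assms(1), of a m] assms(3) m
      descents_before_le_descents[of p "f m"] by simp
  ultimately show ?thesis using descents_before_length_pred[of x m] m assms(2) by simp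
qed

lemma embeddings_ascending_between:
  assumes "embedding x p f" "embedding x p g" "distinct p" "descents x = descents p"
    and "a < length x" "f a \<le> g a"
  shows "ascending p (f a) (g a)"
proof (rule ascending_of_descents_before_eq)
  show "descents_before p (f a) = descents_before p (g a)"
    using embedding_descents_before_eq assms(1,2,4,5) by metis
  show "g a < length p" using assms(2,5) unfolding embedding_def by auto
qed (use assms in simp)

lemma embedding_max:
  assumes f: "embedding x p f" and g: "embedding x p g" and "distinct p" "descents x = descents p"
  shows "embedding x p (\<lambda>a. max (f a) (g a))"
proof -
  have val_max: "p!(max (f a) (g a)) = max (p!(f a)) (p!(g a))" if "a < length x" for a
  proof (cases "f a \<le> g a")
    case True
    have "p!(f a) \<le> p!(g a)"
      using embeddings_ascending_between[OF f g assms(3,4) that True] True by (simp add: ascending_le)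
    thus ?thesis using True by (simp add: max_def)
  next
    case False
    have "p!(g a) \<le> p!(f a)"
      using embeddings_ascending_between[OF g f assms(3,4) that] False by (simp add: ascending_le)
    thus ?thesis using False by (simp add: max_def)
  qed
  show ?thesis unfolding embedding_def
  proof (intro conjI allI impI)
    fix i assume "i < length x" thus "max (f i) (g i) < length p" using f g unfolding embedding_def by auto
  next
    fix i j assume "i < j" "j < length x" thus "max (f i) (g i) < max (f j) (g j)"
      using f g unfolding embedding_def by (simp add: max_def) (metis le_less_trans less_imp_le_nat not_le)
  next
    fix i j assume i: "i < length x" and j: "j < length x"
    have "(x!i < x!j) = (p!(f i) < p!(f j))" "(x!i < x!j) = (p!(g i) < p!(g j))"
      using f g i j unfolding embedding_def by auto
    thus "(x!i < x!j) = (p!(max (f i) (g i)) < p!(max (f j) (g j)))"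
      unfolding val_max[OF i] val_max[OF j] by (auto simp: max_def)
  qed
qed

section \<open>Moving letters of an occurrence\<close>

text \<open>Replacing the position i of an occurrence Q by j yields another occurrence: no value
  of Q lies strictly between p!i and p!j, and no position of Q between i and j can carry a
  value in that range because the run from i to j ascends.\<close>

definition movable :: "nat list \<Rightarrow> nat set \<Rightarrow> nat \<Rightarrow> nat \<Rightarrow> bool" where
  "movable p Q i j \<longleftrightarrow> j < length p \<and> j \<notin> Q \<and> i \<in> Q \<and> i < j \<and> ascending p i j \<and>
     \<not> (\<exists>r\<in>Q. p!i < p!r \<and> p!r < p!j)"

definition move_targets :: "nat list \<Rightarrow> nat set \<Rightarrow> nat set" where
  "move_targets p Q = {j. \<exists>i. movable p Q i j}"

lemma embedding_move:
  assumes f: "embedding x p f" and d: "distinct p" and r: "r < length x"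
    and mv: "movable p (f ` {..<length x}) (f r) j"
  shows "embedding x p (f(r := j))"
proof -
  let ?m = "length x"
  note fl = embedding_less_length[OF f] and fm = embedding_less_iff[OF f]
    and fo = embedding_order[OF f]
  have jn: "j < length p" and jO: "j \<notin> f ` {..<?m}" and rj: "f r < j"
    and asc: "ascending p (f r) j" and nb: "\<And>s. s < ?m \<Longrightarrow> \<not>(p!(f r) < p!(f s) \<and> p!(f s) < p!j)"
    using mv unfolding movable_def by auto
  have prj: "p!(f r) < p!j" using ascending_less[OF asc, of "f r" j] rj by simp
  have same_side: "(p!(f s) < p!j) = (p!(f s) < p!(f r))" "(p!j < p!(f s)) = (p!(f r) < p!(f s))"
    if s: "s < ?m" "s \<noteq> r" for s
  proof -
    have "f s \<noteq> f r" using s r fm[of s r] fm[of r s] by auto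
    hence "p!(f s) \<noteq> p!(f r)" using d fl s r by (simp add: nth_eq_iff_index_eq)
    moreover have "f s \<noteq> j" using jO s by auto
    hence "p!(f s) \<noteq> p!j" using d fl s jn by (simp add: nth_eq_iff_index_eq)
    ultimately show "(p!(f s) < p!j) = (p!(f s) < p!(f r))" "(p!j < p!(f s)) = (p!(f r) < p!(f s))"
      using nb[OF s(1)] prj by auto
  qed
  have j_less: "j < f b" if "r < b" "b < ?m" for b
  proof (rule ccontr)
    assume "\<not> j < f b"
    moreover have "f b \<noteq> j" using jO that by auto
    ultimately have "f b < j" by simp
    moreover have "f r < f b" using fm r that by simp
    ultimately have "p!(f r) < p!(f b)" "p!(f b) < p!j"
      using ascending_less[OF asc, of "f r" "f b"] ascending_less[OF asc, of "f b" j] by auto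
    thus False using nb[OF that(2)] by simp
  qed
  show ?thesis unfolding embedding_def
  proof (intro conjI allI impI)
    fix a assume "a < ?m" thus "(f(r := j)) a < length p" using fl jn by simp
  next
    fix a b assume ab: "a < b" "b < ?m"
    thus "(f(r := j)) a < (f(r := j)) b"
      using fm[of a b] fm[of a r] r rj j_less[of b] by (cases "a = r"; cases "b = r") auto
  next
    fix a b assume a: "a < ?m" and b: "b < ?m"
    thus "(x!a < x!b) = (p!((f(r := j)) a) < p!((f(r := j)) b))"
      using fo[OF a b] same_side[OF a] same_side[OF b] by (cases "a = r"; cases "b = r") auto
  qed
qed

text \<open>Comparing two occurrences with f \<le> h pointwise: the letter of f whose value is largest
  among those that h moves can be moved to its h-position.\<close>

lemma movable_of_embedding_le:
  assumes f: "embedding x p f" and h: "embedding x p h" and d: "distinct p"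
    and de: "descents x = descents p"
    and le: "\<forall>a<length x. f a \<le> h a" and a0: "a0 < length x" "f a0 < h a0"
  shows "\<exists>r<length x. f r < h r \<and> movable p (f ` {..<length x}) (f r) (h r)"
proof -
  let ?m = "length x"
  define D where "D = {a. a < ?m \<and> f a < h a}"
  have Df: "finite D" and Dne: "D \<noteq> {}" using a0 unfolding D_def by auto
  have "Max ((\<lambda>a. p!(f a)) ` D) \<in> (\<lambda>a. p!(f a)) ` D" using Df Dne by simp
  then obtain r where rD: "r \<in> D" and "p!(f r) = Max ((\<lambda>a. p!(f a)) ` D)" by auto
  hence mx: "\<And>s. s \<in> D \<Longrightarrow> p!(f s) \<le> p!(f r)" using Df by simp
  have r: "r < ?m" "f r < h r" using rD unfolding D_def by auto
  have asc: "ascending p (f r) (h r)"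
    using embeddings_ascending_between[OF f h d de r(1)] r(2) by simp
  have prh: "p!(f r) < p!(h r)" using ascending_less[OF asc, of "f r" "h r"] r by simp
  have notin: "h r \<notin> f ` {..<?m}"
  proof
    assume "h r \<in> f ` {..<?m}"
    then obtain s where s: "s < ?m" "h r = f s" by auto
    hence "r < s" using r embedding_less_iff[OF f r(1) s(1)] by simp
    hence "f s < h s" using embedding_less_iff[OF h r(1) s(1)] s(2) by simp
    hence "p!(f s) \<le> p!(f r)" using s(1) by (intro mx) (simp add: D_def)
    thus False using prh s by simp
  qed
  have nb: "\<not>(\<exists>q\<in>f ` {..<?m}. p!(f r) < p!q \<and> p!q < p!(h r))"
  proof
    assume "\<exists>q\<in>f ` {..<?m}. p!(f r) < p!q \<and> p!q < p!(h r)"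
    then obtain s where s: "s < ?m" "p!(f r) < p!(f s)" "p!(f s) < p!(h r)" by auto
    have "p!(h r) < p!(h s)"
      using embedding_order[OF f r(1) s(1)] embedding_order[OF h r(1) s(1)] s by simp
    hence "f s \<noteq> h s" using s by auto
    hence "f s < h s" using s(1) le by (simp add: le_neq_implies_less)
    hence "p!(f s) \<le> p!(f r)" using s(1) by (intro mx) (simp add: D_def)
    thus False using s by simp
  qed
  have "movable p (f ` {..<?m}) (f r) (h r)"
    unfolding movable_def using embedding_less_length[OF h r(1)] notin r asc nb by auto
  thus ?thesis using r by blast
qed

section \<open>Alternating sums over sets of positions\<close>

lemma sum_alternating_interval_eq_0:
  assumes "finite U" "A \<subset> U"
  shows "(\<Sum>T | T \<subseteq> U \<and> A \<subseteq> T. (-1::int) ^ card T) = 0"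
proof (rule sum_alternating_cancels)
  show "finite {T. T \<subseteq> U \<and> A \<subseteq> T}" using assms(1) by simp
  have "{T \<in> {T. T \<subseteq> U \<and> A \<subseteq> T}. even (card T)} = {T. T \<subseteq> U \<and> A \<subseteq> T \<and> even (card T)}"
    "{T \<in> {T. T \<subseteq> U \<and> A \<subseteq> T}. odd (card T)} = {T. T \<subseteq> U \<and> A \<subseteq> T \<and> odd (card T)}"
    by blast+
  thus "card {T \<in> {T. T \<subseteq> U \<and> A \<subseteq> T}. even (card T)} = card {T \<in> {T. T \<subseteq> U \<and> A \<subseteq> T}. odd (card T)}"
    using card_subsupersets_even_odd[OF assms] by presburger
qed

definition adj_tails :: "nat list \<Rightarrow> nat set" where
  "adj_tails p = {i. 1 \<le> i \<and> i < length p \<and> p ! i = p ! (i - 1) + 1}"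

lemma card_adj_tails: "card (adj_tails p) = adj_tail_count p"
  unfolding adj_tails_def adj_tail_count_def ..

lemma adj_tail_move_target:
  assumes "j \<in> adj_tails p" "j - 1 \<in> Q" "j \<notin> Q" shows "j \<in> move_targets p Q"
proof -
  have j: "1 \<le> j" "j < length p" "p!j = p!(j-1) + 1" using assms(1) unfolding adj_tails_def by auto
  have "ascending p (j - 1) j" unfolding ascending_def
  proof (intro allI impI)
    fix d assume "j - 1 \<le> d \<and> d < j"
    hence "Suc d = j" "d = j - 1" by arith+
    thus "p!d < p!Suc d" using j by simp
  qed
  hence "movable p Q (j - 1) j" unfolding movable_def using j assms(2,3) by auto
  thus ?thesis unfolding move_targets_def by blast
qed

lemma movable_smaller_gap:
  assumes p: "is_perm p" and disj: "adj_tails p \<inter> move_targets p Q = {}"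
    and cover: "\<forall>e<length p. e \<notin> Q \<longrightarrow> e \<in> adj_tails p \<union> move_targets p Q"
    and mv: "movable p Q i j"
  shows "\<exists>i' j'. movable p Q i' j' \<and> p!j' - p!i' < p!j - p!i"
proof -
  have jn: "j < length p" and iQ: "i \<in> Q" and ij: "i < j" and asc: "ascending p i j"
    and nb: "\<not> (\<exists>r\<in>Q. p!i < p!r \<and> p!r < p!j)"
    using mv unfolding movable_def by auto
  have dist: "distinct p" and setp: "set p = {1..length p}" using p unfolding is_perm_def by auto
  have pij: "p!i < p!j" using ascending_less[OF asc, of i j] ij by simp
  have j_target: "j \<in> move_targets p Q" using mv unfolding move_targets_def by blast
  have gap: "p!j \<noteq> p!i + 1"
  proof
    assume adj: "p!j = p!i + 1"
    have "j = Suc i"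
    proof (rule ccontr)
      assume "j \<noteq> Suc i"
      hence "p!i < p!Suc i" "p!Suc i < p!j"
        using ascending_less[OF asc, of i "Suc i"] ascending_less[OF asc, of "Suc i" j] ij by auto
      thus False using adj by simp
    qed
    hence "j \<in> adj_tails p" unfolding adj_tails_def using jn adj by simp
    thus False using j_target disj by blast
  qed
  have "p!i + 1 \<in> set p" using setp pij nth_mem[OF jn] by auto
  then obtain q where q: "q < length p" "p!q = p!i + 1" by (auto simp: in_set_conv_nth)
  have qQ: "q \<notin> Q" using nb q pij gap by force
  have "q \<notin> adj_tails p"
  proof
    assume tail: "q \<in> adj_tails p"
    hence "1 \<le> q" "p!(q - 1) = p!i" using q unfolding adj_tails_def by auto
    hence "q - 1 = i" using dist q ij jn by (simp add: nth_eq_iff_index_eq)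
    hence "q \<in> move_targets p Q" using adj_tail_move_target[OF tail _ qQ] iQ by simp
    thus False using tail disj by blast
  qed
  hence "q \<in> move_targets p Q" using cover q(1) qQ by blast
  then obtain i' where mv': "movable p Q i' q" unfolding move_targets_def by blast
  have "ascending p i' q" "i' < q" using mv' unfolding movable_def by auto
  hence "p!i' < p!q" using ascending_less by blast
  moreover have "\<not> (p!i' < p!i \<and> p!i < p!q)" using mv' iQ unfolding movable_def by blast
  ultimately have "p!q - p!i' < p!j - p!i" using q gap pij by linarith
  thus ?thesis using mv' by blast
qed

lemma exists_free_position:
  assumes p: "is_perm p" and "Q \<subseteq> {..<length p}" "Q \<noteq> {..<length p}"
    and disj: "adj_tails p \<inter> move_targets p Q = {}"
  shows "\<exists>e<length p. e \<notin> Q \<and> e \<notin> adj_tails p \<union> move_targets p Q"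
proof (rule ccontr)
  assume "\<not> ?thesis"
  hence cover: "\<forall>e<length p. e \<notin> Q \<longrightarrow> e \<in> adj_tails p \<union> move_targets p Q" by blast
  have immovable: "\<not> movable p Q i j" for i j
  proof (induction "p!j - p!i" arbitrary: i j rule: less_induct)
    case less
    show ?case using movable_smaller_gap[OF p disj cover] less by blast
  qed
  have ex: "\<exists>e. e < length p \<and> e \<notin> Q" using assms(2,3) by auto
  define e where "e = (LEAST e. e < length p \<and> e \<notin> Q)"
  have e: "e < length p" "e \<notin> Q" using LeastI_ex[OF ex] unfolding e_def by auto
  have least: "e' \<in> Q" if "e' < e" for e'
    using not_less_Least[OF that[unfolded e_def]] e(1) that by auto
  have "e \<in> move_targets p Q"
  proof (cases "e \<in> adj_tails p")
    case True
    hence "e - 1 \<in> Q" using least unfolding adj_tails_def by auto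
    thus ?thesis using adj_tail_move_target[OF True _ e(2)] by simp
  qed (use cover e in blast)
  thus False using immovable unfolding move_targets_def by blast
qed

definition occurs_in :: "nat list \<Rightarrow> nat list \<Rightarrow> nat set \<Rightarrow> bool" where
  "occurs_in x p S \<longleftrightarrow> (\<exists>f. embedding x p f \<and> f ` {..<length x} \<subseteq> S)"

text \<open>Take an occurrence inside S with the largest sum of positions.\<close>

lemma exists_unmovable_occurrence:
  assumes d: "distinct p" and "occurs_in x p S"
  shows "\<exists>f. embedding x p f \<and> f ` {..<length x} \<subseteq> S \<and> S \<inter> move_targets p (f ` {..<length x}) = {}"
proof -
  let ?M = "{..<length x}"
  define P where "P k \<longleftrightarrow> (\<exists>f. embedding x p f \<and> f ` ?M \<subseteq> S \<and> sum f ?M = k)" for k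
  obtain f0 where "embedding x p f0" "f0 ` ?M \<subseteq> S" using assms(2) unfolding occurs_in_def by blast
  hence P0: "P (sum f0 ?M)" unfolding P_def by blast
  have bound: "\<forall>k. P k \<longrightarrow> k \<le> length x * length p"
  proof (intro allI impI)
    fix k assume "P k"
    then obtain f where "embedding x p f" "sum f ?M = k" unfolding P_def by blast
    moreover have "sum f ?M \<le> sum (\<lambda>_. length p) ?M"
      by (rule sum_mono) (use \<open>embedding x p f\<close> in \<open>auto simp: embedding_def less_imp_le\<close>)
    ultimately show "k \<le> length x * length p" by simp
  qed
  obtain kmax where "P kmax" and kmax: "\<And>k. P k \<Longrightarrow> k \<le> kmax"
    using Nat.ex_has_greatest_nat[OF P0 bound] by blast
  then obtain f where f: "embedding x p f" "f ` ?M \<subseteq> S" "sum f ?M = kmax" unfolding P_def by blast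
  have "S \<inter> move_targets p (f ` ?M) = {}"
  proof (rule ccontr)
    assume "S \<inter> move_targets p (f ` ?M) \<noteq> {}"
    then obtain i j where j: "j \<in> S" "movable p (f ` ?M) i j" unfolding move_targets_def by blast
    then obtain r where r: "r < length x" "i = f r" unfolding movable_def by auto
    have mv: "movable p (f ` ?M) (f r) j" using j r by simp
    have "P (sum (f(r := j)) ?M)" unfolding P_def using embedding_move[OF f(1) d r(1) mv] f(2) j(1)
      by (intro exI[of _ "f(r := j)"]) auto
    moreover have "sum f ?M < sum (f(r := j)) ?M"
    proof (rule sum_strict_mono_ex1)
      show "\<forall>a\<in>?M. f a \<le> (f(r := j)) a" "\<exists>a\<in>?M. f a < (f(r := j)) a"
        using mv r(1) unfolding movable_def by auto
    qed simp
    ultimately show False using kmax f(3) by fastforce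
  qed
  thus ?thesis using f by blast
qed

lemma unmovable_occurrence_le:
  assumes f: "embedding x p f" and g: "embedding x p g" and d: "distinct p"
    and de: "descents x = descents p" and gS: "g ` {..<length x} \<subseteq> S"
    and unmov: "S \<inter> move_targets p (f ` {..<length x}) = {}" and a: "a < length x"
  shows "g a \<le> f a"
proof (rule ccontr)
  assume "\<not> g a \<le> f a"
  let ?h = "\<lambda>a. max (f a) (g a)"
  obtain r where r: "r < length x" "f r < ?h r" "movable p (f ` {..<length x}) (f r) (?h r)"
    using movable_of_embedding_le[OF f embedding_max[OF f g d de] d de _ a] \<open>\<not> g a \<le> f a\<close> by auto
  hence "g r \<in> S \<inter> move_targets p (f ` {..<length x})"
    using gS unfolding move_targets_def by (auto simp: max_def split: if_splits)
  thus False using unmov by blast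
qed

definition occurrences :: "nat list \<Rightarrow> nat list \<Rightarrow> nat set set" where
  "occurrences x p = {f ` {..<length x} | f. embedding x p f}"

definition unmovable_sets :: "nat list \<Rightarrow> nat set \<Rightarrow> nat set set" where
  "unmovable_sets p Q =
     {S. adj_tails p \<subseteq> S \<and> S \<subseteq> {..<length p} \<and> Q \<subseteq> S \<and> S \<inter> move_targets p Q = {}}"

lemma finite_unmovable_sets: "finite (unmovable_sets p Q)"
  unfolding unmovable_sets_def by (rule finite_subset[of _ "Pow {..<length p}"]) auto

lemma occurrence_sets_eq_Union_unmovable_sets:
  assumes "distinct p"
  shows "{S. adj_tails p \<subseteq> S \<and> S \<subseteq> {..<length p} \<and> occurs_in x p S}
    = \<Union> (unmovable_sets p ` occurrences x p)"
proof (intro equalityI subsetI)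
  fix S assume "S \<in> {S. adj_tails p \<subseteq> S \<and> S \<subseteq> {..<length p} \<and> occurs_in x p S}"
  hence S: "adj_tails p \<subseteq> S" "S \<subseteq> {..<length p}" "occurs_in x p S" by auto
  then obtain f where "embedding x p f" "f ` {..<length x} \<subseteq> S"
    "S \<inter> move_targets p (f ` {..<length x}) = {}"
    using exists_unmovable_occurrence[OF assms] by blast
  hence "f ` {..<length x} \<in> occurrences x p" "S \<in> unmovable_sets p (f ` {..<length x})"
    using S unfolding occurrences_def unmovable_sets_def by auto
  thus "S \<in> \<Union> (unmovable_sets p ` occurrences x p)" by blast
next
  fix S assume "S \<in> \<Union> (unmovable_sets p ` occurrences x p)"
  then obtain f where "embedding x p f" "S \<in> unmovable_sets p (f ` {..<length x})"
    unfolding occurrences_def by blast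
  thus "S \<in> {S. adj_tails p \<subseteq> S \<and> S \<subseteq> {..<length p} \<and> occurs_in x p S}"
    unfolding unmovable_sets_def occurs_in_def by blast
qed

lemma unmovable_sets_disjoint:
  assumes d: "distinct p" and de: "descents x = descents p"
    and Q1: "Q1 \<in> occurrences x p" and Q2: "Q2 \<in> occurrences x p" and ne: "Q1 \<noteq> Q2"
  shows "unmovable_sets p Q1 \<inter> unmovable_sets p Q2 = {}"
proof (rule ccontr)
  obtain f g where f: "embedding x p f" "Q1 = f ` {..<length x}"
    and g: "embedding x p g" "Q2 = g ` {..<length x}"
    using Q1 Q2 unfolding occurrences_def by blast
  assume "unmovable_sets p Q1 \<inter> unmovable_sets p Q2 \<noteq> {}"
  then obtain S where "S \<in> unmovable_sets p Q1" "S \<in> unmovable_sets p Q2" by blast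
  hence "g a \<le> f a" "f a \<le> g a" if "a < length x" for a
    using unmovable_occurrence_le[OF f(1) g(1) d de] unmovable_occurrence_le[OF g(1) f(1) d de] that
    unfolding unmovable_sets_def f(2) g(2) by auto
  hence "Q1 = Q2" unfolding f(2) g(2) by (intro image_cong) (auto intro: order.antisym)
  thus False using ne by simp
qed

lemma occurrence_subset_card:
  assumes "Q \<in> occurrences x p" shows "Q \<subseteq> {..<length p}" "card Q = length x"
proof -
  obtain f where f: "embedding x p f" "Q = f ` {..<length x}"
    using assms unfolding occurrences_def by blast
  show "Q \<subseteq> {..<length p}" using embedding_less_length[OF f(1)] f(2) by auto
  have "inj_on f {..<length x}"
  proof (rule inj_onI)
    fix a b assume "a \<in> {..<length x}" "b \<in> {..<length x}" "f a = f b"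
    thus "a = b" using embedding_less_iff[OF f(1), of a b] embedding_less_iff[OF f(1), of b a]
      by (auto simp: linorder_neq_iff)
  qed
  thus "card Q = length x" using f(2) by (simp add: card_image)
qed

lemma sum_alternating_unmovable_sets_eq_0:
  assumes "is_perm p" "Q \<subseteq> {..<length p}" "Q \<noteq> {..<length p}"
  shows "(\<Sum>S\<in>unmovable_sets p Q. (-1::int) ^ card S) = 0"
proof (cases "adj_tails p \<inter> move_targets p Q = {}")
  case True
  let ?U = "{..<length p} - move_targets p Q" and ?A = "adj_tails p \<union> Q"
  obtain e where "e < length p" "e \<notin> Q" "e \<notin> adj_tails p \<union> move_targets p Q"
    using exists_free_position[OF assms True] by blast
  moreover have "adj_tails p \<subseteq> {..<length p}" unfolding adj_tails_def by auto
  moreover have "Q \<inter> move_targets p Q = {}" unfolding move_targets_def movable_def by auto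
  ultimately have "?A \<subset> ?U" using True assms(2) by blast
  moreover have "unmovable_sets p Q = {S. S \<subseteq> ?U \<and> ?A \<subseteq> S}"
    unfolding unmovable_sets_def by blast
  ultimately show ?thesis using sum_alternating_interval_eq_0[of ?U ?A] by simp
next
  case False
  hence "unmovable_sets p Q = {}" unfolding unmovable_sets_def by blast
  thus ?thesis by (simp only: sum.empty)
qed

text \<open>Each set of positions containing an occurrence of x contains exactly one unmovable
  occurrence, so the sets split into the Boolean intervals of the previous lemma.\<close>

lemma sum_alternating_occurrence_sets_eq_0:
  assumes p: "is_perm p" and x: "is_perm x" and de: "descents x = descents p"
    and "contains x p" "x \<noteq> p"
  shows "(\<Sum>S | adj_tails p \<subseteq> S \<and> S \<subseteq> {..<length p} \<and> occurs_in x p S. (-1::int) ^ card S) = 0"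
proof -
  have d: "distinct p" using p unfolding is_perm_def by simp
  have "finite (occurrences x p)"
    by (rule finite_subset[of _ "Pow {..<length p}"]) (auto dest: occurrence_subset_card)
  hence "(\<Sum>S | adj_tails p \<subseteq> S \<and> S \<subseteq> {..<length p} \<and> occurs_in x p S. (-1::int) ^ card S)
      = (\<Sum>Q\<in>occurrences x p. \<Sum>S\<in>unmovable_sets p Q. (-1::int) ^ card S)"
    unfolding occurrence_sets_eq_Union_unmovable_sets[OF d]
    by (rule sum.UNION_disjoint) (use finite_unmovable_sets unmovable_sets_disjoint[OF d de] in blast)+
  also have "\<dots> = 0"
  proof (rule sum.neutral, intro ballI)
    fix Q assume "Q \<in> occurrences x p"
    hence sub: "Q \<subseteq> {..<length p}" and "card Q < length p"
      using occurrence_subset_card contains_length_less[OF x p assms(4,5)] by auto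
    hence "Q \<noteq> {..<length p}" by auto
    thus "(\<Sum>S\<in>unmovable_sets p Q. (-1::int) ^ card S) = 0"
      by (rule sum_alternating_unmovable_sets_eq_0[OF p sub])
  qed
  finally show ?thesis .
qed

lemma occurs_in_self_iff: "occurs_in p p S \<longleftrightarrow> {..<length p} \<subseteq> S"
proof
  assume "occurs_in p p S"
  then obtain f where "embedding p p f" "f ` {..<length p} \<subseteq> S" unfolding occurs_in_def by blast
  thus "{..<length p} \<subseteq> S" using embedding_same_length_eq_id[of p p f] by auto
qed (use embedding_id in \<open>auto simp: occurs_in_def intro!: exI[of _ id]\<close>)

lemma sum_alternating_occurrence_sets:
  assumes "is_perm p" "is_perm x" "descents x = descents p" "contains x p"
  shows "(\<Sum>S | adj_tails p \<subseteq> S \<and> S \<subseteq> {..<length p} \<and> occurs_in x p S. (-1::int) ^ card S)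
    = (if x = p then (-1) ^ length p else 0)"
proof (cases "x = p")
  case True
  have "adj_tails p \<subseteq> {..<length p}" unfolding adj_tails_def by auto
  hence "{S. adj_tails p \<subseteq> S \<and> S \<subseteq> {..<length p} \<and> occurs_in x p S} = {{..<length p}}"
    unfolding True occurs_in_self_iff by auto
  thus ?thesis using True by simp
qed (use sum_alternating_occurrence_sets_eq_0[OF assms] in simp)

section \<open>Moebius sums over patterns at a set of positions\<close>

lemma finite_perm_interval: "finite {x. is_perm x \<and> contains s x \<and> contains x y}"
proof (rule finite_subset)
  show "{x. is_perm x \<and> contains s x \<and> contains x y} \<subseteq> {xs. set xs \<subseteq> {..length y} \<and> length xs \<le> length y}"
    unfolding is_perm_def by (auto dest: contains_length_le)
qed (rule finite_lists_length_le, simp)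

lemma sum_mobius_interval_eq_0:
  assumes s: "is_perm s" and y: "is_perm y" and ne: "s \<noteq> y"
  shows "(\<Sum>x | is_perm x \<and> contains s x \<and> contains x y. mobius s x) = 0"
proof (cases "contains s y")
  case True
  define Z where "Z = {z. is_perm z \<and> contains s z \<and> contains z y \<and> \<not> contains y z}"
  have "mobius s y = - (\<Sum>z\<in>Z. mobius s z)"
    unfolding Z_def using ne True by (subst mobius.simps) simp
  moreover have "{x. is_perm x \<and> contains s x \<and> contains x y} = insert y Z"
    unfolding Z_def using y True contains_refl contains_antisym by blast
  moreover have "finite Z" unfolding Z_def by (rule finite_subset[OF _ finite_perm_interval]) auto
  moreover have "y \<notin> Z" unfolding Z_def using contains_refl by blast
  ultimately show ?thesis by simp
next
  case False
  hence "{x. is_perm x \<and> contains s x \<and> contains x y} = {}" using contains_trans by blast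
  thus ?thesis by (simp only: sum.empty)
qed

lemma embedding_order_iso_right: "order_iso y L \<Longrightarrow> embedding x y g = embedding x L g"
  unfolding embedding_def order_iso_def by auto

lemma occurs_in_of_embedding_nths:
  assumes g: "embedding x (nths p S) g" shows "occurs_in x p S"
proof -
  define il where "il = filter (\<lambda>i. i \<in> S) [0..<length p]"
  have nths_il: "nths p S = map ((!) p) il" unfolding il_def by (rule nths_conv_map_filter)
  have sw: "sorted_wrt (<) il" unfolding il_def by (rule sorted_wrt_filter) simp
  have il_mem: "il ! (g i) \<in> S \<and> il ! (g i) < length p" if "i < length x" for i
    using embedding_less_length[OF g that] nth_mem[of "g i" il] unfolding nths_il il_def by auto
  have "embedding x p ((!) il \<circ> g)" unfolding embedding_def
  proof (intro conjI allI impI)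
    fix i assume "i < length x" thus "((!) il \<circ> g) i < length p" using il_mem by simp
  next
    fix i j assume "i < j" "j < length x"
    thus "((!) il \<circ> g) i < ((!) il \<circ> g) j"
      using sw embedding_less_iff[OF g] embedding_less_length[OF g] unfolding nths_il
      by (simp add: sorted_wrt_iff_nth_less)
  next
    fix i j assume "i < length x" "j < length x"
    thus "(x!i < x!j) = (p ! (((!) il \<circ> g) i) < p ! (((!) il \<circ> g) j))"
      using embedding_order[OF g] embedding_less_length[OF g] unfolding nths_il by simp
  qed
  moreover have "((!) il \<circ> g) ` {..<length x} \<subseteq> S" using il_mem by auto
  ultimately show ?thesis unfolding occurs_in_def by blast
qed

lemma embedding_nths_of_occurs_in:
  assumes "occurs_in x p S" shows "\<exists>g. embedding x (nths p S) g"
proof -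
  obtain f where f: "embedding x p f" "f ` {..<length x} \<subseteq> S"
    using assms unfolding occurs_in_def by blast
  define il where "il = filter (\<lambda>i. i \<in> S) [0..<length p]"
  have nths_il: "nths p S = map ((!) p) il" unfolding il_def by (rule nths_conv_map_filter)
  have sorted: "sorted il" unfolding il_def by (rule sorted_wrt_filter) simp
  define g where "g a = (SOME k. k < length il \<and> il ! k = f a)" for a
  have g: "g a < length il \<and> il ! (g a) = f a" if "a < length x" for a
  proof -
    have "f a \<in> set il" using f embedding_less_length[OF f(1) that] that unfolding il_def by auto
    hence "\<exists>k. k < length il \<and> il ! k = f a" by (auto simp: in_set_conv_nth)
    thus ?thesis unfolding g_def by (rule someI_ex)
  qed
  have "embedding x (nths p S) g" unfolding embedding_def nths_il
  proof (intro conjI allI impI)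
    fix i assume "i < length x" thus "g i < length (map ((!) p) il)" using g by simp
  next
    fix i j assume ij: "i < j" "j < length x"
    hence "il ! (g i) < il ! (g j)" using g embedding_less_iff[OF f(1)] by simp
    thus "g i < g j" using sorted_nth_mono[OF sorted, of "g j" "g i"] g ij by fastforce
  next
    fix i j assume "i < length x" "j < length x"
    thus "(x!i < x!j) = (map ((!) p) il ! g i < map ((!) p) il ! g j)"
      using g embedding_order[OF f(1)] by simp
  qed
  thus ?thesis by blast
qed

lemma occurs_in_iff_contains_standardize:
  assumes "distinct p"
  shows "occurs_in x p S \<longleftrightarrow> contains x (standardize (nths p S))"
proof -
  have "embedding x (standardize (nths p S)) = embedding x (nths p S)"
    using embedding_order_iso_right[OF order_iso_standardize[OF distinct_nthsI[OF assms]]] by blast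
  hence "contains x (standardize (nths p S)) \<longleftrightarrow> (\<exists>g. embedding x (nths p S) g)"
    unfolding contains_iff_embedding by simp
  thus ?thesis using occurs_in_of_embedding_nths embedding_nths_of_occurs_in by blast
qed

lemma sum_mobius_occurring_eq_0:
  assumes s: "is_perm s" and p: "is_perm p" and S: "S \<subseteq> {..<length p}" and len: "length s < card S"
  shows "(\<Sum>x | is_perm x \<and> contains s x \<and> contains x p \<and> occurs_in x p S. mobius s x) = 0"
proof -
  have dp: "distinct p" using p unfolding is_perm_def by simp
  hence d: "distinct (nths p S)" by simp
  define y where "y = standardize (nths p S)"
  have "length (nths p S) = card S"
    unfolding length_nths using S by (intro arg_cong[where f=card]) auto
  hence "s \<noteq> y" using len length_standardize[OF d] unfolding y_def by auto
  moreover have "{x. is_perm x \<and> contains s x \<and> contains x p \<and> occurs_in x p S}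
      = {x. is_perm x \<and> contains s x \<and> contains x y}"
  proof -
    have "occurs_in x p S \<longleftrightarrow> contains x y" for x
      unfolding y_def by (rule occurs_in_iff_contains_standardize[OF dp])
    moreover have "contains x p" if "occurs_in x p S" for x
      using that unfolding occurs_in_def contains_iff_embedding by blast
    ultimately show ?thesis by blast
  qed
  ultimately show ?thesis
    using sum_mobius_interval_eq_0[OF s is_perm_standardize[OF d]] unfolding y_def by simp
qed

lemma sum_mult_sum_filter_swap:
  fixes f :: "'a \<Rightarrow> 'c::comm_semiring_0" and g :: "'b \<Rightarrow> 'c"
  assumes "finite A" "finite B"
  shows "(\<Sum>x\<in>A. f x * (\<Sum>y | y \<in> B \<and> R x y. g y)) = (\<Sum>y\<in>B. g y * (\<Sum>x | x \<in> A \<and> R x y. f x))"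
proof -
  have "(\<Sum>x\<in>A. f x * (\<Sum>y | y \<in> B \<and> R x y. g y)) = (\<Sum>x\<in>A. \<Sum>y\<in>B. if R x y then f x * g y else 0)"
    unfolding sum.inter_filter[OF assms(2)] sum_distrib_left by (auto intro!: sum.cong)
  also have "\<dots> = (\<Sum>y\<in>B. \<Sum>x\<in>A. if R x y then f x * g y else 0)" by (rule sum.swap)
  also have "\<dots> = (\<Sum>y\<in>B. g y * (\<Sum>x | x \<in> A \<and> R x y. f x))"
    unfolding sum.inter_filter[OF assms(1)] sum_distrib_left by (auto intro!: sum.cong simp: mult.commute)
  finally show ?thesis .
qed

lemma mobius_sign_eq_sum_alternating_occurrence_sets:
  assumes "is_perm \<pi>" "descents \<sigma> = descents \<pi>" "contains \<sigma> \<pi>"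
  shows "mobius \<sigma> \<pi> * (-1) ^ length \<pi> = (\<Sum>x | is_perm x \<and> contains \<sigma> x \<and> contains x \<pi>.
    mobius \<sigma> x * (\<Sum>S | adj_tails \<pi> \<subseteq> S \<and> S \<subseteq> {..<length \<pi>} \<and> occurs_in x \<pi> S. (-1) ^ card S))"
proof -
  let ?P = "{x. is_perm x \<and> contains \<sigma> x \<and> contains x \<pi>}"
  have "\<pi> \<in> ?P" using assms contains_refl by blast
  hence "mobius \<sigma> \<pi> * (-1) ^ length \<pi> = (\<Sum>x\<in>?P. if x = \<pi> then mobius \<sigma> x * (-1) ^ length \<pi> else 0)"
    using finite_perm_interval by (simp add: sum.delta)
  also have "\<dots> = (\<Sum>x\<in>?P. mobius \<sigma> x *
      (\<Sum>S | adj_tails \<pi> \<subseteq> S \<and> S \<subseteq> {..<length \<pi>} \<and> occurs_in x \<pi> S. (-1) ^ card S))"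
  proof (rule sum.cong)
    fix x assume x: "x \<in> ?P"
    hence "descents x = descents \<pi>"
      using contains_descents_le[of \<sigma> x] contains_descents_le[of x \<pi>] assms(2) by simp
    thus "(if x = \<pi> then mobius \<sigma> x * (-1) ^ length \<pi> else 0) = mobius \<sigma> x *
        (\<Sum>S | adj_tails \<pi> \<subseteq> S \<and> S \<subseteq> {..<length \<pi>} \<and> occurs_in x \<pi> S. (-1) ^ card S)"
      using sum_alternating_occurrence_sets[OF assms(1), of x] x by simp
  qed simp
  finally show ?thesis .
qed

theorem mainTheorem7:
  fixes \<sigma> \<pi> :: "nat list" and k :: nat
  assumes "is_perm \<sigma>" and "is_perm \<pi>"
    and "descents \<sigma> = k" and "descents \<pi> = k"
    and "adj_tail_count \<pi> > length \<sigma>"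
  shows "mobius \<sigma> \<pi> = 0"
proof (cases "contains \<sigma> \<pi>")
  case False
  hence "\<sigma> \<noteq> \<pi>" using contains_refl by blast
  thus ?thesis using False by (subst mobius.simps) simp
next
  case True
  define P where "P = {x. is_perm x \<and> contains \<sigma> x \<and> contains x \<pi>}"
  define SS where "SS = {S. adj_tails \<pi> \<subseteq> S \<and> S \<subseteq> {..<length \<pi>}}"
  have fin: "finite P" "finite SS" unfolding P_def SS_def
    by (rule finite_perm_interval, rule finite_subset[of _ "Pow {..<length \<pi>}"]) auto
  have "mobius \<sigma> \<pi> * (-1) ^ length \<pi>
      = (\<Sum>x\<in>P. mobius \<sigma> x * (\<Sum>S | S \<in> SS \<and> occurs_in x \<pi> S. (-1) ^ card S))"
    using mobius_sign_eq_sum_alternating_occurrence_sets[OF assms(2) _ True] assms(3,4)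
    unfolding P_def SS_def by simp
  also have "\<dots> = (\<Sum>S\<in>SS. (-1) ^ card S * (\<Sum>x | x \<in> P \<and> occurs_in x \<pi> S. mobius \<sigma> x))"
    by (rule sum_mult_sum_filter_swap[OF fin])
  also have "\<dots> = 0"
  proof (rule sum.neutral, intro ballI)
    fix S assume S: "S \<in> SS"
    hence "card (adj_tails \<pi>) \<le> card S" unfolding SS_def by (auto intro: card_mono finite_subset)
    hence "length \<sigma> < card S" using assms(5) card_adj_tails[of \<pi>] by simp
    thus "(-1) ^ card S * (\<Sum>x | x \<in> P \<and> occurs_in x \<pi> S. mobius \<sigma> x) = 0"
      using sum_mobius_occurring_eq_0[OF assms(1,2)] S unfolding P_def SS_def by simp
  qed
  finally show ?thesis by simp
qed

end
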